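(* Let $(\Omega,\Sigma,\mu;\phi)$ be a measure preserving dynamical system with associated Perron-Frobenius operator $P$ on $L^1(\Omega,\Sigma,\mu)$. Then the following are equivalent: (i) $P$ is exact, i.e. $\lim_{n\to\infty}P^nf=\bigl(\int_\Omega f\,d\mu\bigr)\mathbf{1}$ in $L^1$ for each $f\in L^1(\Omega,\Sigma,\mu)$. (ii) For each $B\in\Sigma$, \[\lim_{n\to\infty}\sup_{A\in\Sigma}\bigl|\mu(\phi^{-n}(A)\cap B)-\mu(A)\mu(B)\bigr|=0.\] (iii) For each $B\in\Sigma$ there exists $D\in\Sigma$ with $\mu(D)>0$ such that \[\lim_{n\to\infty}\sup_{A\in\Sigma_D}\bigl|\mu(\phi^{-n}(A)\cap B)-\mu(A)\mu(B)\bigr|=0,\] where $\Sigma_D=\{A\cap D:A\in\Sigma\}$.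
   Context: A measure preserving dynamical system $(\Omega,\Sigma,\mu;\phi)$ is a probability space with a measurable map $\phi\colon\Omega\to\Omega$ such that $\mu(\phi^{-1}(A))=\mu(A)$ for all $A\in\Sigma$. The Perron-Frobenius operator $P$ is the unique linear positive operator on $L^1(\Omega,\Sigma,\mu)$ with $\int_A Pf\,d\mu=\int_{\phi^{-1}(A)}f\,d\mu$ for all $f\in L^1$, $A\in\Sigma$. $\mathbf{1}$ is the constant function one. *)

theory Defs
  imports "HOL-Probability.Probability"
begin

definition mpds :: "'a measure \<Rightarrow> ('a \<Rightarrow> 'a) \<Rightarrow> bool" where
  "mpds M \<phi> \<longleftrightarrow> prob_space M \<and> \<phi> \<in> M \<rightarrow>\<^sub>M M \<and>
     (\<forall>A \<in> sets M. emeasure M (\<phi> -` A \<inter> space M) = emeasure M A)"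

text \<open>This determines P f almost
  everywhere, and only depends on the a.e.-class of f.\<close>
definition perron_frobenius :: "'a measure \<Rightarrow> ('a \<Rightarrow> 'a) \<Rightarrow> (('a \<Rightarrow> real) \<Rightarrow> ('a \<Rightarrow> real)) \<Rightarrow> bool" where
  "perron_frobenius M \<phi> P \<longleftrightarrow>
     (\<forall>f. integrable M f \<longrightarrow> integrable M (P f) \<and>
        (\<forall>A \<in> sets M. (\<integral>x\<in>A. P f x \<partial>M) = (\<integral>x\<in>(\<phi> -` A \<inter> space M). f x \<partial>M)))"

definition pf_exact :: "'a measure \<Rightarrow> (('a \<Rightarrow> real) \<Rightarrow> ('a \<Rightarrow> real)) \<Rightarrow> bool" where
  "pf_exact M P \<longleftrightarrow>
     (\<forall>f. integrable M f \<longrightarrow>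
        (\<lambda>n. \<integral>x. \<bar>(P ^^ n) f x - (\<integral>y. f y \<partial>M)\<bar> \<partial>M) \<longlonglongrightarrow> 0)"

end

theory Submission
  imports Defs
begin

text \<open>The conditional expectation of \<open>f\<close> given \<open>\<phi>\<^sup>-\<^sup>n\<Sigma>\<close> is \<open>(P\<^sup>n f) \<circ> \<phi>\<^sup>n\<close>, so exactness of \<open>P\<close>
  says that the reverse martingale \<open>E[f | \<phi>\<^sup>-\<^sup>n\<Sigma>]\<close> converges in \<open>L\<^sup>1\<close> to the constant \<open>\<integral>f\<close>.
  By reverse martingale convergence this happens for all \<open>f\<close> as soon as the tail
  \<open>\<sigma>\<close>-algebra \<open>\<Inter>\<^sub>n \<phi>\<^sup>-\<^sup>n\<Sigma>\<close> is trivial, and already the weak mixing condition (iii) forces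
  every tail set to have measure \<open>0\<close> or \<open>1\<close>.  Conversely \<open>\<mu>(\<phi>\<^sup>-\<^sup>n A \<inter> B) - \<mu>(A) \<mu>(B)\<close>
  is the integral over \<open>A\<close> of \<open>P\<^sup>n \<one>\<^sub>B - \<mu>(B)\<close>, so exactness gives (ii) uniformly in \<open>A\<close>.\<close>

lemma set_integrable_of_integrable:
  fixes f :: "'a \<Rightarrow> 'b::{banach, second_countable_topology}"
  shows "A \<in> sets M \<Longrightarrow> integrable M f \<Longrightarrow> set_integrable M A f"
  unfolding set_integrable_def by (rule integrable_mult_indicator)

lemma set_integral_diff_le_integral_abs:
  fixes v :: "'a \<Rightarrow> real"
  assumes v: "integrable M v" and A: "A \<in> sets M" and B: "B \<in> sets M" and AB: "A \<inter> B = {}"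
  shows "(\<integral>x\<in>A. v x \<partial>M) - (\<integral>x\<in>B. v x \<partial>M) \<le> (\<integral>x. \<bar>v x\<bar> \<partial>M)"
proof -
  have iA: "integrable M (\<lambda>x. indicator A x * v x)" and iB: "integrable M (\<lambda>x. indicator B x * v x)"
    using integrable_mult_indicator[OF A v] integrable_mult_indicator[OF B v] by simp_all
  have "(\<integral>x\<in>A. v x \<partial>M) - (\<integral>x\<in>B. v x \<partial>M) = (\<integral>x. indicator A x * v x - indicator B x * v x \<partial>M)"
    unfolding set_lebesgue_integral_def using iA iB by simp
  also have "\<dots> \<le> (\<integral>x. \<bar>v x\<bar> \<partial>M)"
    using AB by (intro integral_mono Bochner_Integration.integrable_diff iA iB integrable_abs v)
      (auto simp: indicator_def)
  finally show ?thesis .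
qed

lemma abs_set_integral_le_integral_abs:
  fixes v :: "'a \<Rightarrow> real"
  assumes v: "integrable M v" and A: "A \<in> sets M"
  shows "\<bar>\<integral>x\<in>A. v x \<partial>M\<bar> \<le> (\<integral>x. \<bar>v x\<bar> \<partial>M)"
  using set_integral_diff_le_integral_abs[OF v A sets.empty_sets]
    set_integral_diff_le_integral_abs[OF v sets.empty_sets A]
  by (simp add: set_lebesgue_integral_def)

text \<open>Test the transfer identity on the sets where \<open>u\<close> is nonnegative and where it is negative.\<close>

lemma integral_abs_le_of_set_integral_transfer:
  fixes u v :: "'a \<Rightarrow> real"
  assumes \<psi>: "\<psi> \<in> M \<rightarrow>\<^sub>M M" and u: "integrable M u" and v: "integrable M v"
    and transfer: "\<And>A. A \<in> sets M \<Longrightarrow> (\<integral>x\<in>A. u x \<partial>M) = (\<integral>x\<in>\<psi> -` A \<inter> space M. v x \<partial>M)"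
  shows "(\<integral>x. \<bar>u x\<bar> \<partial>M) \<le> (\<integral>x. \<bar>v x\<bar> \<partial>M)"
proof -
  define S where "S = {x \<in> space M. 0 \<le> u x}"
  have S: "S \<in> sets M" and Sc: "space M - S \<in> sets M"
    using u unfolding S_def by auto
  have "(\<integral>x. \<bar>u x\<bar> \<partial>M) = (\<integral>x. indicator S x * u x - indicator (space M - S) x * u x \<partial>M)"
    by (rule Bochner_Integration.integral_cong[OF refl]) (auto simp: S_def indicator_def)
  also have "\<dots> = (\<integral>x\<in>S. u x \<partial>M) - (\<integral>x\<in>space M - S. u x \<partial>M)"
    unfolding set_lebesgue_integral_def
    using integrable_mult_indicator[OF S u] integrable_mult_indicator[OF Sc u] by simp
  also have "\<dots> = (\<integral>x\<in>\<psi> -` S \<inter> space M. v x \<partial>M) - (\<integral>x\<in>\<psi> -` (space M - S) \<inter> space M. v x \<partial>M)"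
    using transfer[OF S] transfer[OF Sc] by simp
  also have "\<dots> \<le> (\<integral>x. \<bar>v x\<bar> \<partial>M)"
    using measurable_sets[OF \<psi> S] measurable_sets[OF \<psi> Sc]
    by (intro set_integral_diff_le_integral_abs v) auto
  finally show ?thesis .
qed

lemma (in prob_space) AE_eq_integral_if_trivial_level_sets:
  fixes g :: "'a \<Rightarrow> real"
  assumes g: "integrable M g"
    and below: "prob {x \<in> space M. g x < integral\<^sup>L M g} \<in> {0, 1}"
    and above: "prob {x \<in> space M. integral\<^sup>L M g < g x} \<in> {0, 1}"
  shows "AE x in M. g x = integral\<^sup>L M g"
proof -
  let ?c = "integral\<^sup>L M g"
  have meas: "{x \<in> space M. g x < ?c} \<in> sets M" "{x \<in> space M. ?c < g x} \<in> sets M"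
    using g by auto
  have "prob {x \<in> space M. g x < ?c} \<noteq> 1"
  proof
    assume "prob {x \<in> space M. g x < ?c} = 1"
    then have "AE x in M. g x < ?c" using prob_Collect_eq_1[OF meas(1)] by simp
    then have "integral\<^sup>L M g < (\<integral>x. ?c \<partial>M)"
      by (intro integral_less_AE_space g) (auto simp: emeasure_space_1)
    then show False by (simp add: prob_space)
  qed
  moreover have "prob {x \<in> space M. ?c < g x} \<noteq> 1"
  proof
    assume "prob {x \<in> space M. ?c < g x} = 1"
    then have "AE x in M. ?c < g x" using prob_Collect_eq_1[OF meas(2)] by simp
    then have "(\<integral>x. ?c \<partial>M) < integral\<^sup>L M g"
      by (intro integral_less_AE_space g) (auto simp: emeasure_space_1)
    then show False by (simp add: prob_space)
  qed
  ultimately have "AE x in M. \<not> g x < ?c" "AE x in M. \<not> ?c < g x"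
    using below above prob_Collect_eq_0[OF meas(1)] prob_Collect_eq_0[OF meas(2)] by auto
  then show ?thesis by eventually_elim simp
qed

text \<open>Integrate the pointwise bound \<open>\<bar>d\<bar> \<le> \<epsilon>/4 + d\<^sup>2/\<epsilon>\<close>.\<close>

lemma (in prob_space) integral_abs_less_of_integral_square_less:
  fixes d :: "'a \<Rightarrow> real"
  assumes d: "integrable M d" and d2: "integrable M (\<lambda>x. (d x)\<^sup>2)" and \<epsilon>: "\<epsilon> > 0"
    and small: "(\<integral>x. (d x)\<^sup>2 \<partial>M) < \<epsilon> * \<epsilon> / 4"
  shows "(\<integral>x. \<bar>d x\<bar> \<partial>M) < \<epsilon>"
proof -
  have "\<bar>t\<bar> \<le> \<epsilon>/4 + t\<^sup>2/\<epsilon>" for t :: real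
  proof -
    have "0 \<le> (\<bar>t\<bar> - \<epsilon>/2)\<^sup>2" by simp
    then show ?thesis using \<epsilon> by (simp add: field_simps power2_eq_square)
  qed
  then have "(\<integral>x. \<bar>d x\<bar> \<partial>M) \<le> (\<integral>x. \<epsilon>/4 + (d x)\<^sup>2/\<epsilon> \<partial>M)"
    using d d2 by (intro integral_mono) auto
  also have "\<dots> = \<epsilon>/4 + (\<integral>x. (d x)\<^sup>2 \<partial>M)/\<epsilon>"
    using d2 by (simp add: prob_space)
  also have "\<dots> < \<epsilon>"
  proof -
    have "(\<integral>x. (d x)\<^sup>2 \<partial>M)/\<epsilon> < \<epsilon>/4" using small \<epsilon> by (simp add: field_simps)
    then show ?thesis using \<epsilon> by linarith
  qed
  finally show ?thesis .
qed

lemma (in prob_space) tendsto_L1_of_Cauchy_subseq: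
  fixes e :: "nat \<Rightarrow> 'a \<Rightarrow> real"
  assumes e: "\<And>n. integrable M (e n)"
    and Cauchy: "\<And>\<epsilon>. \<epsilon> > 0 \<Longrightarrow> \<exists>N. \<forall>i\<ge>N. \<forall>j\<ge>N. (\<integral>x. \<bar>e i x - e j x\<bar> \<partial>M) < \<epsilon>"
    and r: "strict_mono r" and sub: "(\<lambda>i. \<integral>x. \<bar>e (r i) x - c\<bar> \<partial>M) \<longlonglongrightarrow> 0"
  shows "(\<lambda>n. \<integral>x. \<bar>e n x - c\<bar> \<partial>M) \<longlonglongrightarrow> 0"
proof (rule LIMSEQ_I)
  fix \<epsilon> :: real assume "0 < \<epsilon>"
  then obtain N where N: "\<forall>i\<ge>N. \<forall>j\<ge>N. (\<integral>x. \<bar>e i x - e j x\<bar> \<partial>M) < \<epsilon>/2"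
    using Cauchy[of "\<epsilon>/2"] by auto
  obtain I where I: "\<forall>i\<ge>I. norm ((\<integral>x. \<bar>e (r i) x - c\<bar> \<partial>M) - 0) < \<epsilon>/2"
    using LIMSEQ_D[OF sub, of "\<epsilon>/2"] \<open>0 < \<epsilon>\<close> by auto
  define i where "i = max I N"
  have "N \<le> r i" using seq_suble[OF r, of i] unfolding i_def by linarith
  show "\<exists>N. \<forall>n\<ge>N. norm ((\<integral>x. \<bar>e n x - c\<bar> \<partial>M) - 0) < \<epsilon>"
  proof (intro exI allI impI)
    fix n assume "N \<le> n"
    have "(\<integral>x. \<bar>e n x - c\<bar> \<partial>M) \<le> (\<integral>x. \<bar>e n x - e (r i) x\<bar> + \<bar>e (r i) x - c\<bar> \<partial>M)"
      by (intro integral_mono) (use e in auto)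
    also have "\<dots> = (\<integral>x. \<bar>e n x - e (r i) x\<bar> \<partial>M) + (\<integral>x. \<bar>e (r i) x - c\<bar> \<partial>M)"
      by (intro Bochner_Integration.integral_add integrable_abs Bochner_Integration.integrable_diff
          e integrable_const)
    also have "\<dots> < \<epsilon>"
    proof -
      have "(\<integral>x. \<bar>e n x - e (r i) x\<bar> \<partial>M) < \<epsilon>/2" using N \<open>N \<le> n\<close> \<open>N \<le> r i\<close> by blast
      moreover have "(\<integral>x. \<bar>e (r i) x - c\<bar> \<partial>M) < \<epsilon>/2" using I unfolding i_def by auto
      ultimately show ?thesis by linarith
    qed
    finally show "norm ((\<integral>x. \<bar>e n x - c\<bar> \<partial>M) - 0) < \<epsilon>" by simp
  qed
qed

lemma lim_ignore_initial_segment: "lim (\<lambda>n. X (n + k)) = lim (X :: nat \<Rightarrow> real)"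
proof -
  have "(\<lambda>n. X (n + k)) \<longlonglongrightarrow> L \<longleftrightarrow> X \<longlonglongrightarrow> L" for L
    using LIMSEQ_ignore_initial_segment LIMSEQ_offset by metis
  then show ?thesis unfolding lim_def by simp
qed

lemma (in prob_space) sigma_finite_subalgebra_of_subalgebra:
  "subalgebra M F \<Longrightarrow> sigma_finite_subalgebra M F"
  by (intro finite_measure_subalgebra_is_sigma_finite)
    (simp add: finite_measure_subalgebra_def finite_measure_subalgebra_axioms_def finite_measure_axioms)

section \<open>Reverse martingales with trivial tail\<close>

locale decreasing_subalgebras = prob_space +
  fixes F :: "nat \<Rightarrow> 'a measure"
  assumes subalgebra_F: "subalgebra M (F n)"
    and subalgebra_F_mono: "n \<le> m \<Longrightarrow> subalgebra (F n) (F m)"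
begin

lemma sigma_finite_subalgebra_F: "sigma_finite_subalgebra M (F n)"
  by (rule sigma_finite_subalgebra_of_subalgebra[OF subalgebra_F])

context
  fixes f :: "'a \<Rightarrow> real" and K :: real
  assumes f_meas: "f \<in> borel_measurable M" and f_bound: "\<And>x. x \<in> space M \<Longrightarrow> \<bar>f x\<bar> \<le> K"
begin

lemma integrable_bounded: "integrable M f"
  using f_meas f_bound by (intro integrable_const_bound[where B=K]) auto

lemma cond_exp_bounded: "AE x in M. \<bar>real_cond_exp M (F n) f x\<bar> \<le> K"
proof -
  interpret sigma_finite_subalgebra M "F n" by (rule sigma_finite_subalgebra_F)
  have "AE x in M. real_cond_exp M (F n) f x \<le> K" "AE x in M. - K \<le> real_cond_exp M (F n) f x"
    using f_bound by (intro real_cond_exp_le_c real_cond_exp_ge_c integrable_bounded AE_I2;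
        force simp: abs_le_iff)+
  then show ?thesis by eventually_elim auto
qed

lemma integrable_cond_exp: "integrable M (real_cond_exp M (F n) f)"
  using sigma_finite_subalgebra.real_cond_exp_int(1)[OF sigma_finite_subalgebra_F integrable_bounded] .

lemma integrable_cond_exp_mult:
  "integrable M (\<lambda>x. real_cond_exp M (F n) f x * real_cond_exp M (F m) f x)"
proof (rule integrable_const_bound[where B="K * K"])
  show "AE x in M. norm (real_cond_exp M (F n) f x * real_cond_exp M (F m) f x) \<le> K * K"
    using cond_exp_bounded[of n] cond_exp_bounded[of m]
    by eventually_elim (auto simp: abs_mult intro: mult_mono)
qed simp

text \<open>Tower property: \<open>E\<^sub>m (E\<^sub>n f) = E\<^sub>m f\<close>, since \<open>F m\<close> is coarser than \<open>F n\<close>.\<close>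

lemma integral_cond_exp_mult_coarser:
  assumes "n \<le> m"
  shows "(\<integral>x. real_cond_exp M (F m) f x * real_cond_exp M (F n) f x \<partial>M) =
    (\<integral>x. real_cond_exp M (F m) f x * real_cond_exp M (F m) f x \<partial>M)"
proof -
  interpret sigma_finite_subalgebra M "F m" by (rule sigma_finite_subalgebra_F)
  let ?em = "real_cond_exp M (F m) f" and ?en = "real_cond_exp M (F n) f"
  have "(\<integral>x. ?em x * ?en x \<partial>M) = (\<integral>x. ?em x * real_cond_exp M (F m) ?en x \<partial>M)"
    using integrable_cond_exp_mult[of m n] by (intro real_cond_exp_intg(2)[symmetric]) auto
  also have "\<dots> = (\<integral>x. ?em x * ?em x \<partial>M)"
  proof (rule integral_cong_AE)
    have "AE x in M. real_cond_exp M (F m) ?en x = ?em x"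
      by (rule real_cond_exp_nested_subalg[OF subalgebra_F subalgebra_F_mono[OF assms]
            integrable_bounded])
    then show "AE x in M. ?em x * real_cond_exp M (F m) ?en x = ?em x * ?em x"
      by eventually_elim simp
  qed auto
  finally show ?thesis .
qed

lemma integral_cond_exp_diff_square:
  assumes "n \<le> m"
  shows "(\<integral>x. (real_cond_exp M (F n) f x - real_cond_exp M (F m) f x)\<^sup>2 \<partial>M) =
    (\<integral>x. (real_cond_exp M (F n) f x)\<^sup>2 \<partial>M) - (\<integral>x. (real_cond_exp M (F m) f x)\<^sup>2 \<partial>M)"
proof -
  let ?em = "real_cond_exp M (F m) f" and ?en = "real_cond_exp M (F n) f"
  note i = integrable_cond_exp_mult[of n n] integrable_cond_exp_mult[of m m]
    integrable_cond_exp_mult[of m n]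
  have "(\<integral>x. (?en x - ?em x)\<^sup>2 \<partial>M) =
      (\<integral>x. (?en x * ?en x - ?em x * ?em x) - 2 * (?em x * ?en x - ?em x * ?em x) \<partial>M)"
    by (rule Bochner_Integration.integral_cong[OF refl]) (simp add: power2_eq_square algebra_simps)
  also have "\<dots> = (\<integral>x. ?en x * ?en x \<partial>M) - (\<integral>x. ?em x * ?em x \<partial>M)
      - 2 * ((\<integral>x. ?em x * ?en x \<partial>M) - (\<integral>x. ?em x * ?em x \<partial>M))"
    using i by simp
  finally show ?thesis
    using integral_cond_exp_mult_coarser[OF assms] by (simp add: power2_eq_square)
qed

text \<open>The \<open>L\<^sup>2\<close>-norms of \<open>E\<^sub>n f\<close> decrease, so by the identity above the sequence is
  Cauchy in \<open>L\<^sup>2\<close>, hence in \<open>L\<^sup>1\<close>.\<close>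

lemma cond_exp_L1_Cauchy:
  assumes "\<epsilon> > 0"
  shows "\<exists>N. \<forall>i\<ge>N. \<forall>j\<ge>N.
    (\<integral>x. \<bar>real_cond_exp M (F i) f x - real_cond_exp M (F j) f x\<bar> \<partial>M) < \<epsilon>"
proof -
  let ?e = "\<lambda>n. real_cond_exp M (F n) f"
  define a where "a n = (\<integral>x. (?e n x)\<^sup>2 \<partial>M)" for n
  have diff: "(\<integral>x. (?e n x - ?e m x)\<^sup>2 \<partial>M) = a n - a m" if "n \<le> m" for n m
    unfolding a_def by (rule integral_cond_exp_diff_square[OF that])
  have "decseq a"
    unfolding decseq_def
  proof (intro allI impI)
    fix n m :: nat assume "n \<le> m"
    have "0 \<le> (\<integral>x. (?e n x - ?e m x)\<^sup>2 \<partial>M)" by simp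
    then show "a m \<le> a n" using diff[OF \<open>n \<le> m\<close>] by simp
  qed
  moreover have "\<forall>n. 0 \<le> a n" unfolding a_def by auto
  ultimately have "Cauchy a" using decseq_convergent LIMSEQ_imp_Cauchy by blast
  then obtain N where N: "\<forall>m\<ge>N. \<forall>n\<ge>N. dist (a m) (a n) < \<epsilon> * \<epsilon> / 4"
    using metric_CauchyD[of a "\<epsilon> * \<epsilon> / 4"] assms by auto
  have small: "(\<integral>x. \<bar>?e p x - ?e q x\<bar> \<partial>M) < \<epsilon>" if "N \<le> p" "p \<le> q" for p q
  proof (rule integral_abs_less_of_integral_square_less[OF _ _ assms])
    show "integrable M (\<lambda>x. (?e p x - ?e q x)\<^sup>2)"
      using integrable_cond_exp_mult[of p p] integrable_cond_exp_mult[of p q]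
        integrable_cond_exp_mult[of q q]
      by (simp add: power2_eq_square algebra_simps)
    have "dist (a p) (a q) < \<epsilon> * \<epsilon> / 4" using N that by auto
    then show "(\<integral>x. (?e p x - ?e q x)\<^sup>2 \<partial>M) < \<epsilon> * \<epsilon> / 4"
      unfolding diff[OF that(2)] dist_real_def by linarith
  qed (use integrable_cond_exp in auto)
  show ?thesis
  proof (intro exI allI impI)
    fix i j assume "N \<le> i" "N \<le> j"
    then show "(\<integral>x. \<bar>?e i x - ?e j x\<bar> \<partial>M) < \<epsilon>"
      using small[of i j] small[of j i] by (cases "i \<le> j") (auto simp: abs_minus_commute)
  qed
qed

lemma cond_exp_subseq_limit:
  obtains r g where "strict_mono r" and "\<And>k. g \<in> borel_measurable (F k)"
    and "AE x in M. (\<lambda>i. real_cond_exp M (F (r i)) f x) \<longlonglongrightarrow> g x"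
proof -
  let ?e = "\<lambda>n. real_cond_exp M (F n) f"
  obtain r where r: "strict_mono r" and Cauchy: "AE x in M. Cauchy (\<lambda>i. ?e (r i) x)"
    using cauchy_L1_AE_cauchy_subseq[of M ?e] integrable_cond_exp cond_exp_L1_Cauchy by auto
  define g where "g x = lim (\<lambda>i. ?e (r i) x)" for x
  have "g \<in> borel_measurable (F k)" for k
  proof -
    have "?e (r (i + k)) \<in> borel_measurable (F k)" for i
    proof -
      have "k \<le> r (i + k)" using seq_suble[OF r, of "i + k"] by simp
      then show ?thesis
        by (rule measurable_from_subalg[OF subalgebra_F_mono borel_measurable_cond_exp])
    qed
    moreover have "g = (\<lambda>x. lim (\<lambda>i. ?e (r (i + k)) x))"
      unfolding g_def using lim_ignore_initial_segment[of "\<lambda>i. ?e (r i) _" k] by simp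
    ultimately show ?thesis by simp
  qed
  moreover have "AE x in M. (\<lambda>i. ?e (r i) x) \<longlonglongrightarrow> g x"
    using Cauchy by eventually_elim (simp add: g_def Cauchy_convergent_iff convergent_LIMSEQ_iff)
  ultimately show ?thesis using r that by blast
qed

text \<open>If the tail \<open>\<sigma>\<close>-algebra is trivial, the limit along the subsequence is a constant,
  which must be \<open>\<integral>f\<close> since conditional expectations preserve the integral.\<close>

lemma cond_exp_subseq_tendsto_integral:
  assumes tail: "\<And>S. (\<And>k. S \<in> sets (F k)) \<Longrightarrow> prob S = 0 \<or> prob S = 1"
  obtains r where "strict_mono r"
    and "AE x in M. (\<lambda>i. real_cond_exp M (F (r i)) f x) \<longlonglongrightarrow> integral\<^sup>L M f"
proof -
  let ?e = "\<lambda>n. real_cond_exp M (F n) f"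
  obtain r g where r: "strict_mono r" and gF: "\<And>k. g \<in> borel_measurable (F k)"
    and lim: "AE x in M. (\<lambda>i. ?e (r i) x) \<longlonglongrightarrow> g x"
    using cond_exp_subseq_limit by blast
  have gM: "g \<in> borel_measurable M"
    by (rule measurable_from_subalg[OF subalgebra_F gF])
  have bound: "AE x in M. norm (?e (r i) x) \<le> K" for i
    using cond_exp_bounded by simp
  have g: "integrable M g"
    by (rule integrable_dominated_convergence[OF gM _ integrable_const lim bound]) simp
  have "(\<lambda>i. \<integral>x. ?e (r i) x \<partial>M) \<longlonglongrightarrow> integral\<^sup>L M g"
    by (rule integral_dominated_convergence[OF gM _ integrable_const lim bound]) simp
  moreover have "(\<integral>x. ?e n x \<partial>M) = integral\<^sup>L M f" for n
    using sigma_finite_subalgebra.real_cond_exp_int(2)[OF sigma_finite_subalgebra_F integrable_bounded] .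
  ultimately have int_g: "integral\<^sup>L M g = integral\<^sup>L M f"
    by (simp add: LIMSEQ_const_iff)
  have "{x \<in> space M. g x < t} \<in> sets (F k)" "{x \<in> space M. t < g x} \<in> sets (F k)" for t k
    using borel_measurable_less[OF gF[of k] borel_measurable_const[of t]]
      borel_measurable_less[OF borel_measurable_const[of t] gF[of k]] subalgebra_F[of k]
    by (auto simp: subalgebra_def)
  then have "prob {x \<in> space M. g x < integral\<^sup>L M g} \<in> {0, 1}"
    "prob {x \<in> space M. integral\<^sup>L M g < g x} \<in> {0, 1}"
    using tail by auto
  then have "AE x in M. g x = integral\<^sup>L M f"
    using AE_eq_integral_if_trivial_level_sets[OF g] int_g by simp
  with lim have "AE x in M. (\<lambda>i. ?e (r i) x) \<longlonglongrightarrow> integral\<^sup>L M f"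
    by eventually_elim simp
  with r that show ?thesis by blast
qed

theorem cond_exp_tendsto_integral_if_tail_trivial:
  assumes tail: "\<And>S. (\<And>k. S \<in> sets (F k)) \<Longrightarrow> prob S = 0 \<or> prob S = 1"
  shows "(\<lambda>n. \<integral>x. \<bar>real_cond_exp M (F n) f x - integral\<^sup>L M f\<bar> \<partial>M) \<longlonglongrightarrow> 0"
proof -
  let ?e = "\<lambda>n. real_cond_exp M (F n) f" and ?c = "integral\<^sup>L M f"
  obtain r where r: "strict_mono r" and lim: "AE x in M. (\<lambda>i. ?e (r i) x) \<longlonglongrightarrow> ?c"
    using cond_exp_subseq_tendsto_integral[OF tail] by blast
  have "(\<lambda>i. \<integral>x. \<bar>?e (r i) x - ?c\<bar> \<partial>M) \<longlonglongrightarrow> (\<integral>x. 0 \<partial>M)"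
  proof (rule integral_dominated_convergence[where w="\<lambda>_. K + \<bar>?c\<bar>"])
    show "AE x in M. (\<lambda>i. \<bar>?e (r i) x - ?c\<bar>) \<longlonglongrightarrow> 0"
      using lim by eventually_elim (auto intro: tendsto_rabs_zero LIM_zero)
    show "AE x in M. norm \<bar>?e (r i) x - ?c\<bar> \<le> K + \<bar>?c\<bar>" for i
      using cond_exp_bounded[of "r i"] by eventually_elim auto
  qed auto
  then show ?thesis
    using tendsto_L1_of_Cauchy_subseq[OF integrable_cond_exp cond_exp_L1_Cauchy r] by simp
qed

end

end

section \<open>Iterates of the Perron-Frobenius operator\<close>

locale pf_system = prob_space M for M :: "'a measure" +
  fixes \<phi> :: "'a \<Rightarrow> 'a" and P :: "('a \<Rightarrow> real) \<Rightarrow> 'a \<Rightarrow> real"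
  assumes measurable_\<phi>: "\<phi> \<in> M \<rightarrow>\<^sub>M M"
    and emeasure_preimage: "A \<in> sets M \<Longrightarrow> emeasure M (\<phi> -` A \<inter> space M) = emeasure M A"
    and integrable_P: "integrable M f \<Longrightarrow> integrable M (P f)"
    and set_integral_P: "integrable M f \<Longrightarrow> A \<in> sets M \<Longrightarrow>
      (\<integral>x\<in>A. P f x \<partial>M) = (\<integral>x\<in>\<phi> -` A \<inter> space M. f x \<partial>M)"
begin

lemma measurable_funpow: "(\<phi> ^^ n) \<in> M \<rightarrow>\<^sub>M M"
  by (induction n) (auto intro: measurable_comp[OF _ measurable_\<phi>, simplified comp_def])

lemma funpow_in_space: "x \<in> space M \<Longrightarrow> (\<phi> ^^ n) x \<in> space M"
  using measurable_space[OF measurable_funpow] .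

lemma sets_funpow_preimage: "A \<in> sets M \<Longrightarrow> (\<phi> ^^ n) -` A \<inter> space M \<in> sets M"
  using measurable_sets[OF measurable_funpow] .

lemma funpow_Suc_preimage:
  "(\<phi> ^^ Suc n) -` A \<inter> space M = (\<phi> ^^ n) -` (\<phi> -` A \<inter> space M) \<inter> space M"
  by (auto simp: funpow_in_space)

lemma emeasure_funpow_preimage:
  "A \<in> sets M \<Longrightarrow> emeasure M ((\<phi> ^^ n) -` A \<inter> space M) = emeasure M A"
proof (induction n arbitrary: A)
  case (Suc n)
  then show ?case
    using measurable_sets[OF measurable_\<phi>] emeasure_preimage by (simp only: funpow_Suc_preimage)
qed (simp add: sets.Int_space_eq2)

lemma measure_funpow_preimage:
  "A \<in> sets M \<Longrightarrow> measure M ((\<phi> ^^ n) -` A \<inter> space M) = measure M A"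
  by (simp add: measure_def emeasure_funpow_preimage)

lemma distr_funpow: "distr M M (\<phi> ^^ n) = M"
  by (rule measure_eqI) (auto simp: emeasure_distr measurable_funpow emeasure_funpow_preimage)

lemma integral_funpow_comp:
  "g \<in> borel_measurable M \<Longrightarrow> (\<integral>x. g ((\<phi> ^^ n) x) \<partial>M) = (\<integral>x. g x \<partial>M)"
  for g :: "'a \<Rightarrow> real"
  using integral_distr[OF measurable_funpow, of g n] distr_funpow by simp

lemma integrable_funpow_comp: "integrable M g \<Longrightarrow> integrable M (\<lambda>x. g ((\<phi> ^^ n) x))"
  for g :: "'a \<Rightarrow> real"
  using integrable_distr_eq[OF measurable_funpow, of g n] distr_funpow by simp

lemma integrable_iterate: "integrable M f \<Longrightarrow> integrable M ((P ^^ n) f)"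
  by (induction n) (simp_all add: integrable_P)

lemma set_integral_iterate:
  assumes f: "integrable M f" and A: "A \<in> sets M"
  shows "(\<integral>x\<in>A. (P ^^ n) f x \<partial>M) = (\<integral>x\<in>(\<phi> ^^ n) -` A \<inter> space M. f x \<partial>M)"
  using A
proof (induction n arbitrary: A)
  case (Suc n)
  have "(\<integral>x\<in>A. (P ^^ Suc n) f x \<partial>M) = (\<integral>x\<in>\<phi> -` A \<inter> space M. (P ^^ n) f x \<partial>M)"
    using set_integral_P[OF integrable_iterate[OF f] Suc.prems] by simp
  also have "\<dots> = (\<integral>x\<in>(\<phi> ^^ n) -` (\<phi> -` A \<inter> space M) \<inter> space M. f x \<partial>M)"
    using Suc.IH measurable_sets[OF measurable_\<phi> Suc.prems] by blast
  finally show ?case by (simp only: funpow_Suc_preimage)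
qed (simp add: sets.Int_space_eq2)

lemma L1_dist_iterate_le:
  assumes f: "integrable M f" and g: "integrable M g"
  shows "(\<integral>x. \<bar>(P ^^ n) f x - (P ^^ n) g x\<bar> \<partial>M) \<le> (\<integral>x. \<bar>f x - g x\<bar> \<partial>M)"
proof (rule integral_abs_le_of_set_integral_transfer[OF measurable_funpow])
  fix A assume A: "A \<in> sets M"
  have "set_integrable M A ((P ^^ n) f)" "set_integrable M A ((P ^^ n) g)"
    "set_integrable M ((\<phi> ^^ n) -` A \<inter> space M) f" "set_integrable M ((\<phi> ^^ n) -` A \<inter> space M) g"
    using A sets_funpow_preimage[OF A] f g
    by (simp_all add: set_integrable_of_integrable integrable_iterate)
  then show "(\<integral>x\<in>A. (P ^^ n) f x - (P ^^ n) g x \<partial>M) =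
      (\<integral>x\<in>(\<phi> ^^ n) -` A \<inter> space M. f x - g x \<partial>M)"
    using set_integral_iterate[OF f A] set_integral_iterate[OF g A] by simp
qed (use f g integrable_iterate in auto)

definition preimage_algebra :: "nat \<Rightarrow> 'a measure" where
  "preimage_algebra n = vimage_algebra (space M) (\<phi> ^^ n) M"

lemma sets_preimage_algebra:
  "sets (preimage_algebra n) = {(\<phi> ^^ n) -` C \<inter> space M | C. C \<in> sets M}"
  unfolding preimage_algebra_def using funpow_in_space by (intro sets_vimage_algebra2) auto

lemma space_preimage_algebra [simp]: "space (preimage_algebra n) = space M"
  by (simp add: preimage_algebra_def)

sublocale preimage: decreasing_subalgebras M preimage_algebra
proof
  show "subalgebra M (preimage_algebra n)" for n
    by (auto simp: subalgebra_def sets_preimage_algebra sets_funpow_preimage)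
  show "subalgebra (preimage_algebra n) (preimage_algebra m)" if nm: "n \<le> m" for n m
  proof -
    obtain k where m: "m = k + n" using le_Suc_ex[OF nm] by (metis add.commute)
    have eq: "(\<phi> ^^ m) -` C \<inter> space M = (\<phi> ^^ n) -` ((\<phi> ^^ k) -` C \<inter> space M) \<inter> space M" for C
      unfolding m funpow_add using funpow_in_space by auto
    have "(\<phi> ^^ m) -` C \<inter> space M \<in> sets (preimage_algebra n)" if "C \<in> sets M" for C
      unfolding eq sets_preimage_algebra using sets_funpow_preimage[OF that] by blast
    then show ?thesis by (auto simp: subalgebra_def sets_preimage_algebra)
  qed
qed

lemma cond_exp_preimage_algebra:
  assumes f: "integrable M f"
  shows "AE x in M. real_cond_exp M (preimage_algebra n) f x = (P ^^ n) f ((\<phi> ^^ n) x)"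
proof -
  interpret sigma_finite_subalgebra M "preimage_algebra n"
    by (rule preimage.sigma_finite_subalgebra_F)
  let ?g = "(P ^^ n) f"
  have g: "integrable M ?g" by (rule integrable_iterate[OF f])
  show ?thesis
  proof (rule real_cond_exp_charact)
    show "integrable M f" "integrable M (\<lambda>x. ?g ((\<phi> ^^ n) x))"
      using f integrable_funpow_comp[OF g] by auto
    show "(\<lambda>x. ?g ((\<phi> ^^ n) x)) \<in> borel_measurable (preimage_algebra n)"
      unfolding preimage_algebra_def using g funpow_in_space
      by (intro measurable_compose[OF measurable_vimage_algebra1]) auto
    fix A assume "A \<in> sets (preimage_algebra n)"
    then obtain C where C: "C \<in> sets M" and A: "A = (\<phi> ^^ n) -` C \<inter> space M"
      by (auto simp: sets_preimage_algebra)
    have "(\<integral>x\<in>A. ?g ((\<phi> ^^ n) x) \<partial>M) = (\<integral>x. indicator C ((\<phi> ^^ n) x) * ?g ((\<phi> ^^ n) x) \<partial>M)"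
      unfolding set_lebesgue_integral_def A
      by (rule Bochner_Integration.integral_cong[OF refl]) (auto simp: indicator_def funpow_in_space)
    also have "\<dots> = (\<integral>x\<in>C. ?g x \<partial>M)"
      unfolding set_lebesgue_integral_def using C g
      by (simp add: integral_funpow_comp[of "\<lambda>x. indicator C x * ?g x"])
    also have "\<dots> = (\<integral>x\<in>A. f x \<partial>M)" unfolding A by (rule set_integral_iterate[OF f C])
    finally show "(\<integral>x\<in>A. f x \<partial>M) = (\<integral>x\<in>A. ?g ((\<phi> ^^ n) x) \<partial>M)" by simp
  qed
qed

lemma L1_dist_iterate_eq_cond_exp:
  assumes f: "integrable M f"
  shows "(\<integral>x. \<bar>(P ^^ n) f x - c\<bar> \<partial>M) = (\<integral>x. \<bar>real_cond_exp M (preimage_algebra n) f x - c\<bar> \<partial>M)"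
proof -
  have "(\<integral>x. \<bar>(P ^^ n) f x - c\<bar> \<partial>M) = (\<integral>x. \<bar>(P ^^ n) f ((\<phi> ^^ n) x) - c\<bar> \<partial>M)"
    using integrable_iterate[OF f] by (intro integral_funpow_comp[symmetric]) auto
  also have "\<dots> = (\<integral>x. \<bar>real_cond_exp M (preimage_algebra n) f x - c\<bar> \<partial>M)"
  proof (rule integral_cong_AE)
    show "AE x in M. \<bar>(P ^^ n) f ((\<phi> ^^ n) x) - c\<bar> = \<bar>real_cond_exp M (preimage_algebra n) f x - c\<bar>"
      using cond_exp_preimage_algebra[OF f, of n] by eventually_elim simp
  qed (use integrable_funpow_comp[OF integrable_iterate[OF f]] in auto)
  finally show ?thesis .
qed

end

section \<open>Mixing and exactness\<close>

definition mixing_defect :: "'a measure \<Rightarrow> ('a \<Rightarrow> 'a) \<Rightarrow> 'a set set \<Rightarrow> 'a set \<Rightarrow> nat \<Rightarrow> real" where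
  "mixing_defect M \<phi> \<A> B n =
    (SUP A \<in> \<A>. \<bar>measure M ((\<phi> ^^ n) -` A \<inter> space M \<inter> B) - measure M A * measure M B\<bar>)"

lemma (in prob_space) abs_prob_diff_prob_mult_le_one: "\<bar>prob X - prob Y * prob Z\<bar> \<le> 1"
proof -
  have "0 \<le> prob Y * prob Z" "prob Y * prob Z \<le> 1"
    by (auto intro: mult_le_one)
  then show ?thesis using prob_le_1[of X] measure_nonneg[of M X] by linarith
qed

lemma (in prob_space) tendsto_mixing_term_if_mixing_defect:
  assumes defect: "mixing_defect M \<phi> \<A> B \<longlonglongrightarrow> 0" and A: "\<And>n. A n \<in> \<A>"
  shows "(\<lambda>n. \<bar>prob ((\<phi> ^^ n) -` A n \<inter> space M \<inter> B) - prob (A n) * prob B\<bar>) \<longlonglongrightarrow> 0"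
proof (rule tendsto_sandwich[OF _ _ tendsto_const defect])
  show "\<forall>\<^sub>F n in sequentially. \<bar>prob ((\<phi> ^^ n) -` A n \<inter> space M \<inter> B) - prob (A n) * prob B\<bar>
      \<le> mixing_defect M \<phi> \<A> B n"
    unfolding mixing_defect_def using A abs_prob_diff_prob_mult_le_one
    by (intro always_eventually allI cSUP_upper bdd_aboveI2) auto
qed auto

lemma (in prob_space) local_mixing_if_mixing:
  assumes "\<forall>B \<in> sets M. mixing_defect M \<phi> (sets M) B \<longlonglongrightarrow> 0"
  shows "\<forall>B \<in> sets M. \<exists>D \<in> sets M. prob D > 0 \<and>
    mixing_defect M \<phi> ((\<lambda>E. E \<inter> D) ` sets M) B \<longlonglongrightarrow> 0"
proof -
  have "(\<lambda>E. E \<inter> space M) ` sets M = sets M"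
    using sets.Int_space_eq2 by (auto simp: image_iff)
  then show ?thesis using assms by (metis prob_space sets.top zero_less_one)
qed

context pf_system
begin

text \<open>Testing local mixing on \<open>D\<close> and on \<open>C\<^sub>n \<inter> D\<close>, where \<open>T = \<phi>\<^sup>-\<^sup>n C\<^sub>n\<close>, shows that
  \<open>\<mu>(C\<^sub>n \<inter> D)\<close> tends both to \<open>\<mu>(D) \<mu>(T)\<close> and to \<open>\<mu>(C\<^sub>n \<inter> D) \<mu>(T)\<close>; since \<open>\<mu>(D) > 0\<close>
  this forces \<open>\<mu>(T) (1 - \<mu>(T)) = 0\<close>.\<close>

lemma tail_trivial_if_local_mixing:
  assumes local_mixing: "\<forall>B \<in> sets M. \<exists>D \<in> sets M. prob D > 0 \<and>
      mixing_defect M \<phi> ((\<lambda>E. E \<inter> D) ` sets M) B \<longlonglongrightarrow> 0"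
    and T: "\<And>n. T \<in> sets (preimage_algebra n)"
  shows "prob T = 0 \<or> prob T = 1"
proof -
  have "T \<in> sets M" using T[of 0] by (auto simp: sets_preimage_algebra)
  then obtain D where D: "D \<in> sets M" "prob D > 0"
    and defect: "mixing_defect M \<phi> ((\<lambda>E. E \<inter> D) ` sets M) T \<longlonglongrightarrow> 0"
    using local_mixing by blast
  have "\<forall>n. \<exists>C \<in> sets M. T = (\<phi> ^^ n) -` C \<inter> space M"
    using T by (force simp: sets_preimage_algebra)
  then obtain C where C: "\<And>n. C n \<in> sets M" and T_eq: "\<And>n. T = (\<phi> ^^ n) -` C n \<inter> space M"
    by metis
  define z where "z n = prob (C n \<inter> D)" for n
  have hit: "prob ((\<phi> ^^ n) -` A \<inter> space M \<inter> T) = prob (A \<inter> C n)" if "A \<in> sets M" for n A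
  proof -
    have "(\<phi> ^^ n) -` A \<inter> space M \<inter> T = (\<phi> ^^ n) -` (A \<inter> C n) \<inter> space M"
      using T_eq[of n] by auto
    moreover have "prob ((\<phi> ^^ n) -` (A \<inter> C n) \<inter> space M) = prob (A \<inter> C n)"
      using that C by (intro measure_funpow_preimage) auto
    ultimately show ?thesis by (simp only:)
  qed
  have "(\<lambda>n. \<bar>prob ((\<phi> ^^ n) -` D \<inter> space M \<inter> T) - prob D * prob T\<bar>) \<longlonglongrightarrow> 0"
    using D by (intro tendsto_mixing_term_if_mixing_defect[OF defect]) (auto intro: image_eqI[of D])
  then have "(\<lambda>n. z n - prob D * prob T) \<longlonglongrightarrow> 0"
    using hit[OF D(1)] by (simp add: z_def Int_commute tendsto_rabs_zero_iff)
  then have z: "z \<longlonglongrightarrow> prob D * prob T"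
    by (rule LIM_zero_cancel)
  have "(\<lambda>n. \<bar>prob ((\<phi> ^^ n) -` (C n \<inter> D) \<inter> space M \<inter> T) - prob (C n \<inter> D) * prob T\<bar>) \<longlonglongrightarrow> 0"
    using C D by (intro tendsto_mixing_term_if_mixing_defect[OF defect]) auto
  moreover have "prob ((\<phi> ^^ n) -` (C n \<inter> D) \<inter> space M \<inter> T) = z n" for n
  proof -
    have "C n \<inter> D \<inter> C n = C n \<inter> D" by auto
    then show ?thesis using hit[of "C n \<inter> D" n] C D unfolding z_def by auto
  qed
  ultimately have "(\<lambda>n. \<bar>z n * (1 - prob T)\<bar>) \<longlonglongrightarrow> 0"
    unfolding z_def by (simp add: right_diff_distrib)
  then have "(\<lambda>n. z n * (1 - prob T)) \<longlonglongrightarrow> 0" by (simp only: tendsto_rabs_zero_iff)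
  moreover have "(\<lambda>n. z n * (1 - prob T)) \<longlonglongrightarrow> prob D * prob T * (1 - prob T)"
    by (intro tendsto_mult z tendsto_const)
  ultimately have "prob D * prob T * (1 - prob T) = 0"
    by (rule LIMSEQ_unique[symmetric])
  then show ?thesis using D(2) by auto
qed

lemma iterate_tendsto_integral_if_local_mixing:
  assumes local_mixing: "\<forall>B \<in> sets M. \<exists>D \<in> sets M. prob D > 0 \<and>
      mixing_defect M \<phi> ((\<lambda>E. E \<inter> D) ` sets M) B \<longlonglongrightarrow> 0"
    and f: "f \<in> borel_measurable M" "\<And>x. x \<in> space M \<Longrightarrow> \<bar>f x\<bar> \<le> K"
  shows "(\<lambda>n. \<integral>x. \<bar>(P ^^ n) f x - integral\<^sup>L M f\<bar> \<partial>M) \<longlonglongrightarrow> 0"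
  using preimage.cond_exp_tendsto_integral_if_tail_trivial[OF f
      tail_trivial_if_local_mixing[OF local_mixing]]
  by (simp add: L1_dist_iterate_eq_cond_exp[OF preimage.integrable_bounded[OF f]])

lemma iterate_tendsto_integral_of_L1_approx:
  assumes f: "integrable M f" and g: "\<And>k. integrable M (g k)"
    and approx: "(\<lambda>k. \<integral>x. \<bar>f x - g k x\<bar> \<partial>M) \<longlonglongrightarrow> 0"
    and g_lim: "\<And>k. (\<lambda>n. \<integral>x. \<bar>(P ^^ n) (g k) x - integral\<^sup>L M (g k)\<bar> \<partial>M) \<longlonglongrightarrow> 0"
  shows "(\<lambda>n. \<integral>x. \<bar>(P ^^ n) f x - integral\<^sup>L M f\<bar> \<partial>M) \<longlonglongrightarrow> 0"
proof (rule LIMSEQ_I)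
  fix \<epsilon> :: real assume "0 < \<epsilon>"
  then obtain k where k: "(\<integral>x. \<bar>f x - g k x\<bar> \<partial>M) < \<epsilon>/3"
    using LIMSEQ_D[OF approx, of "\<epsilon>/3"] by fastforce
  obtain N where N: "\<forall>n\<ge>N. (\<integral>x. \<bar>(P ^^ n) (g k) x - integral\<^sup>L M (g k)\<bar> \<partial>M) < \<epsilon>/3"
    using LIMSEQ_D[OF g_lim, of "\<epsilon>/3"] \<open>0 < \<epsilon>\<close> by fastforce
  have const: "\<bar>integral\<^sup>L M (g k) - integral\<^sup>L M f\<bar> \<le> (\<integral>x. \<bar>f x - g k x\<bar> \<partial>M)"
    using integral_abs_bound[of M "\<lambda>x. f x - g k x"] f g by (simp add: abs_minus_commute)
  show "\<exists>N. \<forall>n\<ge>N. norm ((\<integral>x. \<bar>(P ^^ n) f x - integral\<^sup>L M f\<bar> \<partial>M) - 0) < \<epsilon>"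
  proof (intro exI allI impI)
    fix n assume "N \<le> n"
    let ?Pf = "(P ^^ n) f" and ?Pg = "(P ^^ n) (g k)"
    have i: "integrable M ?Pf" "integrable M ?Pg"
      using integrable_iterate f g by auto
    have "(\<integral>x. \<bar>?Pf x - integral\<^sup>L M f\<bar> \<partial>M) \<le> (\<integral>x. \<bar>?Pf x - ?Pg x\<bar> +
        \<bar>?Pg x - integral\<^sup>L M (g k)\<bar> + \<bar>integral\<^sup>L M (g k) - integral\<^sup>L M f\<bar> \<partial>M)"
      using i by (intro integral_mono) auto
    also have "\<dots> = (\<integral>x. \<bar>?Pf x - ?Pg x\<bar> \<partial>M) + (\<integral>x. \<bar>?Pg x - integral\<^sup>L M (g k)\<bar> \<partial>M)
        + \<bar>integral\<^sup>L M (g k) - integral\<^sup>L M f\<bar>"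
      using i by (simp add: prob_space)
    also have "\<dots> < \<epsilon>"
    proof -
      have "(\<integral>x. \<bar>?Pg x - integral\<^sup>L M (g k)\<bar> \<partial>M) < \<epsilon>/3" using N \<open>N \<le> n\<close> by blast
      then show ?thesis using L1_dist_iterate_le[OF f g[of k], of n] k const by linarith
    qed
    finally show "norm ((\<integral>x. \<bar>?Pf x - integral\<^sup>L M f\<bar> \<partial>M) - 0) < \<epsilon>" by simp
  qed
qed

lemma pf_exact_if_local_mixing:
  assumes local_mixing: "\<forall>B \<in> sets M. \<exists>D \<in> sets M. prob D > 0 \<and>
      mixing_defect M \<phi> ((\<lambda>E. E \<inter> D) ` sets M) B \<longlonglongrightarrow> 0"
  shows "pf_exact M P"
  unfolding pf_exact_def
proof (intro allI impI)
  fix f :: "'a \<Rightarrow> real" assume f: "integrable M f"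
  define g where "g k x = max (- real k) (min (real k) (f x))" for k x
  have f_meas: "f \<in> borel_measurable M" using f by auto
  then have g_meas: "g k \<in> borel_measurable M" for k unfolding g_def by measurable
  have g_bound: "\<bar>g k x\<bar> \<le> real k" for k x unfolding g_def by auto
  have "(\<lambda>k. \<integral>x. \<bar>f x - g k x\<bar> \<partial>M) \<longlonglongrightarrow> (\<integral>x. 0 \<partial>M)"
  proof (rule integral_dominated_convergence[where w="\<lambda>x. \<bar>f x\<bar>"])
    show "AE x in M. (\<lambda>k. \<bar>f x - g k x\<bar>) \<longlonglongrightarrow> 0"
    proof (rule AE_I2, rule tendsto_eventually)
      fix x
      have "\<bar>f x - g k x\<bar> = 0" if "nat \<lceil>\<bar>f x\<bar>\<rceil> \<le> k" for k
        using that unfolding g_def by linarith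
      then show "\<forall>\<^sub>F k in sequentially. \<bar>f x - g k x\<bar> = 0"
        unfolding eventually_sequentially by blast
    qed
    show "AE x in M. norm \<bar>f x - g k x\<bar> \<le> \<bar>f x\<bar>" for k
      unfolding g_def by (intro AE_I2) auto
    show "(\<lambda>x. \<bar>f x - g k x\<bar>) \<in> borel_measurable M" for k
      using f_meas g_meas by measurable
  qed (use f in auto)
  then show "(\<lambda>n. \<integral>x. \<bar>(P ^^ n) f x - (\<integral>y. f y \<partial>M)\<bar> \<partial>M) \<longlonglongrightarrow> 0"
    using g_meas g_bound
    by (intro iterate_tendsto_integral_of_L1_approx[OF f] iterate_tendsto_integral_if_local_mixing
        [OF local_mixing] preimage.integrable_bounded) auto
qed

lemma mixing_if_pf_exact:
  assumes exact: "pf_exact M P" and B: "B \<in> sets M"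
  shows "mixing_defect M \<phi> (sets M) B \<longlonglongrightarrow> 0"
proof -
  let ?f = "indicator B :: 'a \<Rightarrow> real"
  have f: "integrable M ?f" using B by (simp add: emeasure_eq_measure)
  have int_f: "integral\<^sup>L M ?f = prob B" using B by simp
  define b where "b n = (\<integral>x. \<bar>(P ^^ n) ?f x - prob B\<bar> \<partial>M)" for n
  have "(\<lambda>n. \<integral>x. \<bar>(P ^^ n) ?f x - integral\<^sup>L M ?f\<bar> \<partial>M) \<longlonglongrightarrow> 0"
    using exact f unfolding pf_exact_def by blast
  then have "b \<longlonglongrightarrow> 0" unfolding b_def int_f .
  have term_le: "\<bar>prob ((\<phi> ^^ n) -` A \<inter> space M \<inter> B) - prob A * prob B\<bar> \<le> b n"
    if A: "A \<in> sets M" for n A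
  proof -
    have "(\<integral>x\<in>(\<phi> ^^ n) -` A \<inter> space M. ?f x \<partial>M) = (\<integral>x. indicator ((\<phi> ^^ n) -` A \<inter> space M \<inter> B) x \<partial>M)"
      unfolding set_lebesgue_integral_def
      by (rule Bochner_Integration.integral_cong[OF refl]) (simp add: indicator_def)
    then have "prob ((\<phi> ^^ n) -` A \<inter> space M \<inter> B) = (\<integral>x\<in>(\<phi> ^^ n) -` A \<inter> space M. ?f x \<partial>M)"
      by (simp add: Int_assoc Int_absorb2 sets.sets_into_space[OF B])
    also have "\<dots> = (\<integral>x\<in>A. (P ^^ n) ?f x \<partial>M)" using set_integral_iterate[OF f A] by simp
    finally have "prob ((\<phi> ^^ n) -` A \<inter> space M \<inter> B) - prob A * prob B =
        (\<integral>x\<in>A. (P ^^ n) ?f x - prob B \<partial>M)"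
      using A integrable_iterate[OF f]
      by (simp add: set_integrable_of_integrable set_integral_const emeasure_eq_measure)
    also have "\<bar>\<dots>\<bar> \<le> b n"
      unfolding b_def using A integrable_iterate[OF f]
      by (intro abs_set_integral_le_integral_abs) auto
    finally show ?thesis .
  qed
  show ?thesis
  proof (rule tendsto_sandwich[OF _ _ tendsto_const \<open>b \<longlonglongrightarrow> 0\<close>])
    show "\<forall>\<^sub>F n in sequentially. 0 \<le> mixing_defect M \<phi> (sets M) B n"
      unfolding mixing_defect_def using term_le
      by (intro always_eventually allI order_trans[OF abs_ge_zero cSUP_upper[of "{}"]] bdd_aboveI2)
        auto
    show "\<forall>\<^sub>F n in sequentially. mixing_defect M \<phi> (sets M) B n \<le> b n"
      unfolding mixing_defect_def using term_le
      by (intro always_eventually allI cSUP_least) auto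
  qed
qed

end

theorem theorem2p2:
  fixes M :: "'a measure" and \<phi> :: "'a \<Rightarrow> 'a"
    and P :: "('a \<Rightarrow> real) \<Rightarrow> ('a \<Rightarrow> real)"
  assumes "mpds M \<phi>"
    and "perron_frobenius M \<phi> P"
  shows "(pf_exact M P
      \<longleftrightarrow> (\<forall>B \<in> sets M.
            (\<lambda>n. SUP A \<in> sets M.
                \<bar>measure M ((\<phi> ^^ n) -` A \<inter> space M \<inter> B) - measure M A * measure M B\<bar>)
            \<longlonglongrightarrow> 0))
    \<and> (pf_exact M P
      \<longleftrightarrow> (\<forall>B \<in> sets M. \<exists>D \<in> sets M. measure M D > 0 \<and>
            (\<lambda>n. SUP A \<in> (\<lambda>E. E \<inter> D) ` sets M.
                \<bar>measure M ((\<phi> ^^ n) -` A \<inter> space M \<inter> B) - measure M A * measure M B\<bar>)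
            \<longlonglongrightarrow> 0))"
proof -
  interpret pf_system M \<phi> P
    using assms unfolding mpds_def perron_frobenius_def pf_system_def pf_system_axioms_def by blast
  show ?thesis
    unfolding mixing_defect_def[symmetric]
    using mixing_if_pf_exact local_mixing_if_mixing pf_exact_if_local_mixing by blast
qed

end
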